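(* Let $s,t$ be planar trees and let $F_s^*,F_t^*$ be the dual basis elements in the graded dual $\mathrm{TSym}^*$ (whose product is the transpose of the coproduct $\Delta$ of $\mathrm{TSym}$). Then $$F_s^*\cdot F_t^*=\sum_{r:\ s\backslash t\ \le_{PT}\ r\ \le_{PT}\ s/t}F_r^*.$$
   Context: A planar tree is a rooted tree in which the children of each node are linearly ordered and every node has either no children (a leaf) or at least two children (an internal node); the one-leaf tree is allowed. If $t$ has $n+1$ leaves, $\deg t=n$; $\mathrm{ideg}(t)$ is the number of internal nodes; leaves are numbered $1,\dots,n+1$ from left to right. For $0\le i\le n$, with $P$ the path from the root to leaf $i+1$: ${}^it$ is obtained by deleting, at each internal node $v$ on $P$, the children of $v$ strictly to the right of the child on $P$ (with their subtrees) and then contracting every node with exactly one child; $t^i$ likewise deleting the children strictly to the left. The splitting is allowable if $\mathrm{ideg}({}^it)+\mathrm{ideg}(t^i)=\mathrm{ideg}(t)$. $\mathrm{TSym}$ has basis $\{F_t\}$ indexed by planar trees, with coproduct $\Delta(F_t)=\sum F_{{}^it}\otimes F_{t^i}$ over $0\le i\le\deg t$ with allowable splitting. $s/t$ is the tree obtained by identifying the root of $s$ with the leftmost leaf of $t$; $s\backslash t$ is obtained by identifying the root of $t$ with the rightmost leaf of $s$. Planar Tamari order: let $x$ be an internal node of a tree $s$ whose rightmost child $y$ is internal, with children of $x$ being $c_1,\dots,c_{a-1},y$ ($a\ge2$) and children of $y$ being $d_1,\dots,d_{b+1}$ ($b\ge1$), left to right. The left rotation of $s$ at $x$ replaces the subtree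 at $x$ by a node whose children are $z,d_2,\dots,d_{b+1}$, where $z$ is a new node with children $c_1,\dots,c_{a-1},d_1$ (all subtrees below these kept). The planar Tamari order $\le_{PT}$ on trees of a given degree is the reflexive–transitive closure of the relation "$t$ is a left rotation of $s$". *)

theory Defs
  imports Main
begin

text \<open>Planar trees: rooted trees with linearly ordered children. The datatype
  allows arbitrary nodes; well-formedness (every internal node has at least two
  children) is the predicate ptree_wf.\<close>

datatype ptree = Leaf | Node "ptree list"

fun ptree_wf :: "ptree \<Rightarrow> bool" where
  "ptree_wf Leaf = True"
| "ptree_wf (Node cs) = (2 \<le> length cs \<and> (\<forall>c\<in>set cs. ptree_wf c))"

fun leaves :: "ptree \<Rightarrow> nat" where
  "leaves Leaf = 1"
| "leaves (Node cs) = sum_list (map leaves cs)"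

definition deg :: "ptree \<Rightarrow> nat" where
  "deg t = leaves t - 1"

fun ideg :: "ptree \<Rightarrow> nat" where
  "ideg Leaf = 0"
| "ideg (Node cs) = 1 + sum_list (map ideg cs)"

text \<open>Left part  ^i t  (leaves indexed from 0 here, so index i is leaf i+1 of the
  paper): delete children strictly right of the path to leaf i, then contract
  nodes with exactly one child.  lpl processes a list of siblings.\<close>
fun lp :: "nat \<Rightarrow> ptree \<Rightarrow> ptree" and lpl :: "nat \<Rightarrow> ptree list \<Rightarrow> ptree list" where
  "lp i Leaf = Leaf"
| "lp i (Node cs) = (case lpl i cs of [c] \<Rightarrow> c | cs' \<Rightarrow> Node cs')"
| "lpl i [] = []"
| "lpl i (c # rest) =
     (if i < leaves c then [lp i c] else c # lpl (i - leaves c) rest)"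

fun rp :: "nat \<Rightarrow> ptree \<Rightarrow> ptree" and rpl :: "nat \<Rightarrow> ptree list \<Rightarrow> ptree list" where
  "rp i Leaf = Leaf"
| "rp i (Node cs) = (case rpl i cs of [c] \<Rightarrow> c | cs' \<Rightarrow> Node cs')"
| "rpl i [] = []"
| "rpl i (c # rest) =
     (if i < leaves c then rp i c # rest else rpl (i - leaves c) rest)"

definition allowable :: "nat \<Rightarrow> ptree \<Rightarrow> bool" where
  "allowable i t \<longleftrightarrow> ideg (lp i t) + ideg (rp i t) = ideg t"

text \<open>Elements of the graded dual TSym^*: functions from trees to coefficients
  (the coefficient of F_r^* ), supported on well-formed trees.  The product is the transpose of the
  coproduct Delta(F_r) = sum over allowable i of F_{^i r} (x) F_{r^i}.\<close>

definition dualb :: "ptree \<Rightarrow> ptree \<Rightarrow> int" where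
  "dualb s = (\<lambda>r. if r = s then 1 else 0)"

definition dual_prod :: "(ptree \<Rightarrow> int) \<Rightarrow> (ptree \<Rightarrow> int) \<Rightarrow> ptree \<Rightarrow> int" where
  "dual_prod f g = (\<lambda>r. if ptree_wf r then
      (\<Sum>i\<in>{0..deg r}. if allowable i r then f (lp i r) * g (rp i r) else 0)
     else 0)"

text \<open>s/t : identify root of s with leftmost leaf of t.\<close>
fun graft_left :: "ptree \<Rightarrow> ptree \<Rightarrow> ptree" where
  "graft_left s Leaf = s"
| "graft_left s (Node []) = Node []"
| "graft_left s (Node (c # cs)) = Node (graft_left s c # cs)"

definition tree_over :: "ptree \<Rightarrow> ptree \<Rightarrow> ptree" where
  "tree_over s t = graft_left s t"

text \<open>s\t : identify root of t with rightmost leaf of s.\<close>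
fun graft_right :: "ptree \<Rightarrow> ptree \<Rightarrow> ptree"
  and graft_right_l :: "ptree list \<Rightarrow> ptree \<Rightarrow> ptree list" where
  "graft_right Leaf t = t"
| "graft_right (Node cs) t = Node (graft_right_l cs t)"
| "graft_right_l [] t = []"
| "graft_right_l [c] t = [graft_right c t]"
| "graft_right_l (c # d # cs) t = c # graft_right_l (d # cs) t"

definition tree_under :: "ptree \<Rightarrow> ptree \<Rightarrow> ptree" where
  "tree_under s t = graft_right s t"

inductive lrot :: "ptree \<Rightarrow> ptree \<Rightarrow> bool" where
  rot_root: "\<lbrakk>cs \<noteq> []; 2 \<le> length ds\<rbrakk> \<Longrightarrow>
      lrot (Node (cs @ [Node ds])) (Node (Node (cs @ [hd ds]) # tl ds))"
| rot_sub: "lrot c c' \<Longrightarrow> lrot (Node (xs @ c # ys)) (Node (xs @ c' # ys))"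

definition pt_le :: "ptree \<Rightarrow> ptree \<Rightarrow> bool" where
  "pt_le s t = lrot\<^sup>*\<^sup>* s t"

end

theory Submission
  imports Defs
begin

text \<open>The left part of a splitting at index i has i + 1 leaves, so in the coefficient of
  F_r^* in F_s^* F_t^* only the splitting at the last leaf of s can contribute, and the
  coefficient is 1 exactly when r splits allowably there into s and t.

  Splitting is monotone for the planar Tamari order: a left rotation of r induces on each
  part either a left rotation or nothing. Both s\t and s/t split into s and t, so for r
  between them the parts are squeezed between s and s and between t and t, and equal them by
  antisymmetry. Conversely, an allowable splitting leaves every node on the path through its
  first or its last child, and an induction along the path, one rotation per node, places
  r between the two grafts of its parts.\<close>

definition contract :: "ptree list \<Rightarrow> ptree" where
  "contract cs = (case cs of [c] \<Rightarrow> c | _ \<Rightarrow> Node cs)"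

lemma lp_Node: "lp i (Node cs) = contract (lpl i cs)"
  by (simp add: contract_def split: list.split)

lemma rp_Node: "rp i (Node cs) = contract (rpl i cs)"
  by (simp add: contract_def split: list.split)

declare lp.simps(2)[simp del] rp.simps(2)[simp del]

lemma contract_single [simp]: "contract [c] = c"
  by (simp add: contract_def)

lemma contract_Cons_Cons [simp]: "contract (a # b # cs) = Node (a # b # cs)"
  by (simp add: contract_def)

lemma contract_Cons: "cs \<noteq> [] \<Longrightarrow> contract (c # cs) = Node (c # cs)"
  by (cases cs) auto

lemma contract_append_Cons: "xs \<noteq> [] \<Longrightarrow> contract (xs @ c # ys) = Node (xs @ c # ys)"
  by (cases xs) (auto simp: contract_Cons)

abbreviation leaves_list :: "ptree list \<Rightarrow> nat" where
  "leaves_list cs \<equiv> sum_list (map leaves cs)"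

lemma leaves_contract [simp]: "cs \<noteq> [] \<Longrightarrow> leaves (contract cs) = leaves_list cs"
  by (cases cs rule: remdups_adj.cases) auto

lemma ideg_contract_snoc:
  "ideg (contract (xs @ [c])) = (if xs = [] then ideg c else 1 + sum_list (map ideg xs) + ideg c)"
  by (simp add: contract_append_Cons)

lemma ideg_contract_Cons:
  "ideg (contract (c # cs)) = (if cs = [] then ideg c else 1 + ideg c + sum_list (map ideg cs))"
  by (cases cs) auto

lemma ptree_wf_contract: "cs \<noteq> [] \<Longrightarrow> \<forall>c\<in>set cs. ptree_wf c \<Longrightarrow> ptree_wf (contract cs)"
  by (cases cs rule: remdups_adj.cases) auto

lemma leaves_pos: "ptree_wf t \<Longrightarrow> 0 < leaves t"
proof (induction t)
  case (Node cs)
  then show ?case by (cases cs) auto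
qed simp

lemma leaves_list_pos: "cs \<noteq> [] \<Longrightarrow> \<forall>c\<in>set cs. ptree_wf c \<Longrightarrow> 0 < leaves_list cs"
  by (cases cs) (auto dest: leaves_pos)

lemma ptree_wf_Node_snoc:
  assumes "ptree_wf (Node cs)"
  obtains xs c where "cs = xs @ [c]" "xs \<noteq> []" "ptree_wf c"
  using assms by (cases cs rule: rev_cases) (auto simp: Suc_le_length_iff)

lemma ptree_wf_Node_Cons:
  assumes "ptree_wf (Node cs)"
  obtains c cs' where "cs = c # cs'" "cs' \<noteq> []" "ptree_wf c"
  using assms by (cases cs) (auto simp: Suc_le_length_iff)

subsection \<open>Splitting a tree at a leaf\<close>

lemma lpl_append:
  "lpl i (xs @ ys) = (if i < leaves_list xs then lpl i xs else xs @ lpl (i - leaves_list xs) ys)"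
  by (induction xs arbitrary: i) (auto simp: algebra_simps)

lemma rpl_append:
  "rpl i (xs @ ys) = (if i < leaves_list xs then rpl i xs @ ys else rpl (i - leaves_list xs) ys)"
  by (induction xs arbitrary: i) (auto simp: algebra_simps)

lemma lpl_beyond: "leaves_list cs \<le> i \<Longrightarrow> lpl i cs = cs"
  by (induction cs arbitrary: i) auto

lemma rpl_beyond: "leaves_list cs \<le> i \<Longrightarrow> rpl i cs = []"
  by (induction cs arbitrary: i) auto

lemma lpl_ne: "cs \<noteq> [] \<Longrightarrow> lpl i cs \<noteq> []"
  by (cases cs) auto

lemma rpl_ne: "i < leaves_list cs \<Longrightarrow> rpl i cs \<noteq> []"
  by (induction cs arbitrary: i) auto

lemma leaves_list_split:
  assumes "i < leaves_list cs"
  obtains xs c ys where "cs = xs @ c # ys" "leaves_list xs \<le> i" "i < leaves_list xs + leaves c"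
  using assms
proof (induction cs arbitrary: i thesis)
  case (Cons a cs)
  show ?case
  proof (cases "i < leaves a")
    case True
    then show ?thesis using Cons.prems(1)[of "[]"] by simp
  next
    case False
    then have "i - leaves a < leaves_list cs" using Cons.prems(2) by simp
    then obtain xs c ys where
      "cs = xs @ c # ys" "leaves_list xs \<le> i - leaves a" "i - leaves a < leaves_list xs + leaves c"
      using Cons.IH by blast
    then show ?thesis using False Cons.prems(1)[of "a # xs" c ys] by simp
  qed
qed simp

lemma lpl_rpl_at_split:
  assumes "leaves_list xs \<le> i" "i < leaves_list xs + leaves c"
  shows "lpl i (xs @ c # ys) = xs @ [lp (i - leaves_list xs) c]"
    and "rpl i (xs @ c # ys) = rp (i - leaves_list xs) c # ys"
proof -
  have "\<not> i < leaves_list xs" "i - leaves_list xs < leaves c"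
    using assms by linarith+
  then show "lpl i (xs @ c # ys) = xs @ [lp (i - leaves_list xs) c]"
    and "rpl i (xs @ c # ys) = rp (i - leaves_list xs) c # ys"
    by (simp_all add: lpl_append rpl_append)
qed

lemma leaves_lp:
  shows "i < leaves t \<Longrightarrow> leaves (lp i t) = i + 1"
    and "i < leaves_list cs \<Longrightarrow> leaves_list (lpl i cs) = i + 1"
proof (induction i t and i cs rule: lp_lpl.induct)
  case (2 i cs)
  then have "cs \<noteq> []" by auto
  with 2 show ?case using lpl_ne[of cs i] by (simp add: lp_Node)
qed auto

lemma ptree_wf_lp:
  shows "ptree_wf t \<Longrightarrow> ptree_wf (lp i t)"
    and "\<forall>c\<in>set cs. ptree_wf c \<Longrightarrow> \<forall>c\<in>set (lpl i cs). ptree_wf c"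
proof (induction i t and i cs rule: lp_lpl.induct)
  case (2 i cs)
  then have "cs \<noteq> []" by auto
  with 2 show ?case using lpl_ne[of cs i] by (simp add: lp_Node ptree_wf_contract)
qed auto

lemma ptree_wf_rp:
  shows "ptree_wf t \<Longrightarrow> i < leaves t \<Longrightarrow> ptree_wf (rp i t)"
    and "\<forall>c\<in>set cs. ptree_wf c \<Longrightarrow> i < leaves_list cs \<Longrightarrow> \<forall>c\<in>set (rpl i cs). ptree_wf c"
proof (induction i t and i cs rule: lp_lpl.induct)
  case (2 i cs)
  then show ?case using rpl_ne[of i cs] by (simp add: rp_Node ptree_wf_contract)
qed auto

subsection \<open>Left rotations\<close>

lemma leaves_lrot: "lrot a b \<Longrightarrow> leaves a = leaves b"
proof (induction rule: lrot.induct)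
  case (rot_root cs ds)
  then show ?case by (cases ds) auto
qed simp

lemma ideg_lrot: "lrot a b \<Longrightarrow> ideg a = ideg b"
proof (induction rule: lrot.induct)
  case (rot_root cs ds)
  then show ?case by (cases ds) auto
qed simp

lemma size_lrot: "lrot a b \<Longrightarrow> size a = size b"
proof (induction rule: lrot.induct)
  case (rot_root cs ds)
  then show ?case by (cases ds) (auto simp: size_list_conv_sum_list)
qed (simp add: size_list_conv_sum_list)

text \<open>Potential for antisymmetry of the planar Tamari order: a rotation at x replaces the
  first child d_1 of y by the strictly larger first child z of the new node, and leaves the
  sizes of all other first children unchanged.\<close>

fun first_child_weight :: "ptree \<Rightarrow> nat" where
  "first_child_weight Leaf = 0"
| "first_child_weight (Node cs) =
     (case cs of [] \<Rightarrow> 0 | c # _ \<Rightarrow> size c) + sum_list (map first_child_weight cs)"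

lemma first_child_weight_lrot: "lrot a b \<Longrightarrow> first_child_weight a < first_child_weight b"
proof (induction rule: lrot.induct)
  case (rot_root cs ds)
  then show ?case by (cases ds; cases cs) (auto simp: size_list_conv_sum_list)
next
  case (rot_sub c c' xs ys)
  then show ?case using size_lrot[OF rot_sub.hyps] by (cases xs) auto
qed

lemma pt_le_refl: "pt_le a a"
  by (simp add: pt_le_def)

lemma pt_le_trans [trans]: "pt_le a b \<Longrightarrow> pt_le b c \<Longrightarrow> pt_le a c"
  unfolding pt_le_def by (rule rtranclp_trans)

lemma pt_le_if_lrot: "lrot a b \<Longrightarrow> pt_le a b"
  by (simp add: pt_le_def)

lemma first_child_weight_pt_le:
  "pt_le a b \<Longrightarrow> a = b \<or> first_child_weight a < first_child_weight b"
  unfolding pt_le_def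
  by (induction rule: rtranclp_induct) (auto dest: first_child_weight_lrot)

lemma pt_le_antisym: "pt_le a b \<Longrightarrow> pt_le b a \<Longrightarrow> a = b"
  using first_child_weight_pt_le[of a b] first_child_weight_pt_le[of b a] by auto

lemma leaves_pt_le: "pt_le a b \<Longrightarrow> leaves a = leaves b"
  unfolding pt_le_def by (induction rule: rtranclp_induct) (auto dest: leaves_lrot)

lemma ideg_pt_le: "pt_le a b \<Longrightarrow> ideg a = ideg b"
  unfolding pt_le_def by (induction rule: rtranclp_induct) (auto dest: ideg_lrot)

lemma pt_le_Node_cong: "pt_le c c' \<Longrightarrow> pt_le (Node (xs @ c # ys)) (Node (xs @ c' # ys))"
  unfolding pt_le_def
proof (induction rule: rtranclp_induct)
  case (step c' c'')
  then show ?case by (meson lrot.rot_sub rtranclp.rtrancl_into_rtrancl)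
qed simp

lemma lrot_contract_cong: "lrot c c' \<Longrightarrow> lrot (contract (xs @ c # ys)) (contract (xs @ c' # ys))"
proof (cases "xs = [] \<and> ys = []")
  case False
  assume "lrot c c'"
  then have "lrot (Node (xs @ c # ys)) (Node (xs @ c' # ys))" by (rule lrot.rot_sub)
  moreover have "contract (xs @ d # ys) = Node (xs @ d # ys)" for d
    using False by (cases xs) (auto simp: contract_Cons)
  ultimately show ?thesis by simp
qed simp

subsection \<open>Splitting and rotations\<close>

lemma lp_rot_root:
  assumes "cs \<noteq> []" "2 \<le> length ds"
  shows "lrot\<^sup>=\<^sup>= (lp i (Node (cs @ [Node ds]))) (lp i (Node (Node (cs @ [hd ds]) # tl ds)))"
proof -
  obtain d ds' where ds: "ds = d # ds'" "ds' \<noteq> []"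
    using assms(2) by (cases ds) (auto simp: Suc_le_length_iff)
  consider "i < leaves_list cs" | "leaves_list cs \<le> i" "i < leaves_list cs + leaves d"
    | "leaves_list cs + leaves d \<le> i" by linarith
  then show ?thesis
  proof cases
    case 1
    then show ?thesis using ds by (simp add: lp_Node lpl_append)
  next
    case 2
    then have "\<not> i < leaves_list cs" "i - leaves_list cs < leaves d" by linarith+
    then show ?thesis using 2 ds assms(1) by (simp add: lp_Node lpl_append contract_append_Cons)
  next
    case 3
    define j where "j = i - leaves_list cs"
    define es where "es = lpl (j - leaves d) ds'"
    have j: "\<not> i < leaves_list cs" "\<not> j < leaves d" "\<not> i < leaves_list cs + leaves d"
      using 3 unfolding j_def by linarith+
    have es: "es \<noteq> []" unfolding es_def using ds(2) by (rule lpl_ne)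
    have "lpl j [Node ds] = [Node (d # es)]"
    proof (cases "j < leaves (Node ds)")
      case True
      then show ?thesis using j es ds by (simp add: lp_Node es_def contract_Cons)
    next
      case False
      then have "es = ds'" using ds unfolding es_def by (simp add: lpl_beyond)
      with False ds show ?thesis by simp
    qed
    then have "lp i (Node (cs @ [Node ds])) = Node (cs @ [Node (d # es)])"
      using j assms(1) by (simp add: lp_Node lpl_append contract_append_Cons flip: j_def)
    moreover have "lp i (Node (Node (cs @ [hd ds]) # tl ds)) = Node (Node (cs @ [d]) # es)"
      using ds j es unfolding es_def j_def
      by (simp add: lp_Node contract_Cons diff_diff_add)
    moreover have "lrot (Node (cs @ [Node (d # es)])) (Node (Node (cs @ [d]) # es))"
      using lrot.rot_root[OF assms(1), of "d # es"] es by (cases es) auto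
    ultimately show ?thesis by simp
  qed
qed

lemma rp_rot_root:
  assumes "cs \<noteq> []" "2 \<le> length ds"
  shows "lrot\<^sup>=\<^sup>= (rp i (Node (cs @ [Node ds]))) (rp i (Node (Node (cs @ [hd ds]) # tl ds)))"
proof -
  obtain d ds' where ds: "ds = d # ds'" "ds' \<noteq> []"
    using assms(2) by (cases ds) (auto simp: Suc_le_length_iff)
  consider "i < leaves_list cs" | "leaves_list cs \<le> i" "i < leaves_list cs + leaves d"
    | "leaves_list cs + leaves d \<le> i" by linarith
  then show ?thesis
  proof cases
    case 1
    have es: "rpl i cs \<noteq> []" using 1 by (rule rpl_ne)
    have "rp i (Node (cs @ [Node ds])) = Node (rpl i cs @ [Node (d # ds')])"
      using ds 1 es by (simp add: rp_Node rpl_append contract_append_Cons)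
    moreover have "rp i (Node (Node (cs @ [hd ds]) # tl ds)) = Node (Node (rpl i cs @ [d]) # ds')"
      using ds 1 es by (simp add: rp_Node rpl_append contract_append_Cons contract_Cons)
    moreover have "lrot (Node (rpl i cs @ [Node (d # ds')])) (Node (Node (rpl i cs @ [d]) # ds'))"
      using lrot.rot_root[OF es, of "d # ds'"] ds by (cases ds') auto
    ultimately show ?thesis by simp
  next
    case 2
    then have "\<not> i < leaves_list cs" "i - leaves_list cs < leaves d" by linarith+
    then show ?thesis using 2 ds by (simp add: rp_Node rpl_append contract_Cons)
  next
    case 3
    then have "\<not> i < leaves_list cs" "\<not> i - leaves_list cs < leaves d" by linarith+
    then show ?thesis using 3 ds
      by (cases "i - leaves_list cs < leaves (Node ds)")
        (simp_all add: rp_Node rpl_append rpl_beyond diff_diff_add)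
  qed
qed

lemma lp_lrot: "lrot a b \<Longrightarrow> lrot\<^sup>=\<^sup>= (lp i a) (lp i b)"
proof (induction arbitrary: i rule: lrot.induct)
  case (rot_root cs ds)
  then show ?case by (rule lp_rot_root)
next
  case (rot_sub c c' xs ys)
  have lc: "leaves c = leaves c'" using rot_sub.hyps by (rule leaves_lrot)
  consider "i < leaves_list xs" | "leaves_list xs \<le> i" "i < leaves_list xs + leaves c"
    | "leaves_list xs + leaves c \<le> i" by linarith
  then show ?case
  proof cases
    case 1
    then show ?thesis by (simp add: lp_Node lpl_append)
  next
    case 2
    then show ?thesis
      using rot_sub.IH[of "i - leaves_list xs"] lc
        lrot_contract_cong[of "lp (i - leaves_list xs) c" "lp (i - leaves_list xs) c'" xs "[]"]
      by (auto simp: lp_Node lpl_rpl_at_split)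
  next
    case 3
    then have "\<not> i < leaves_list xs" "\<not> i - leaves_list xs < leaves c" by linarith+
    then show ?thesis using lc lrot_contract_cong[OF rot_sub.hyps] by (simp add: lp_Node lpl_append)
  qed
qed

lemma rp_lrot: "lrot a b \<Longrightarrow> lrot\<^sup>=\<^sup>= (rp i a) (rp i b)"
proof (induction arbitrary: i rule: lrot.induct)
  case (rot_root cs ds)
  then show ?case by (rule rp_rot_root)
next
  case (rot_sub c c' xs ys)
  have lc: "leaves c = leaves c'" using rot_sub.hyps by (rule leaves_lrot)
  consider "i < leaves_list xs" | "leaves_list xs \<le> i" "i < leaves_list xs + leaves c"
    | "leaves_list xs + leaves c \<le> i" by linarith
  then show ?case
  proof cases
    case 1
    then show ?thesis using lrot_contract_cong[OF rot_sub.hyps, of "rpl i xs" ys]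
      by (simp add: rp_Node rpl_append)
  next
    case 2
    then show ?thesis
      using rot_sub.IH[of "i - leaves_list xs"] lc
        lrot_contract_cong[of "rp (i - leaves_list xs) c" "rp (i - leaves_list xs) c'" "[]" ys]
      by (auto simp: rp_Node lpl_rpl_at_split)
  next
    case 3
    then have "\<not> i < leaves_list xs" "\<not> i - leaves_list xs < leaves c" by linarith+
    then show ?thesis using lc by (simp add: rp_Node rpl_append)
  qed
qed

lemma pt_le_lp: "pt_le a b \<Longrightarrow> pt_le (lp i a) (lp i b)"
  unfolding pt_le_def
proof (induction rule: rtranclp_induct)
  case (step b c)
  then show ?case using lp_lrot[OF step.hyps(2), of i] by auto
qed simp

lemma pt_le_rp: "pt_le a b \<Longrightarrow> pt_le (rp i a) (rp i b)"
  unfolding pt_le_def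
proof (induction rule: rtranclp_induct)
  case (step b c)
  then show ?case using rp_lrot[OF step.hyps(2), of i] by auto
qed simp

subsection \<open>Grafting\<close>

lemma graft_right_l_snoc: "graft_right_l (xs @ [c]) t = xs @ [graft_right c t]"
proof (induction xs)
  case (Cons a xs)
  then show ?case by (cases xs) auto
qed simp

lemma leaves_graft_right:
  "ptree_wf s \<Longrightarrow> 0 < leaves t \<Longrightarrow> leaves (graft_right s t) = leaves s + leaves t - 1"
proof (induction s)
  case (Node cs)
  then obtain xs c where "cs = xs @ [c]" "ptree_wf c" by (blast elim: ptree_wf_Node_snoc)
  with Node show ?case using leaves_pos[of c] by (simp add: graft_right_l_snoc)
qed simp

lemma leaves_graft_left:
  "ptree_wf t \<Longrightarrow> 0 < leaves s \<Longrightarrow> leaves (graft_left s t) = leaves s + leaves t - 1"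
proof (induction t)
  case (Node cs)
  then obtain c cs' where cs: "cs = c # cs'" "cs' \<noteq> []" "ptree_wf c"
    by (blast elim: ptree_wf_Node_Cons)
  then have "0 < leaves_list cs'"
    using Node.prems(1) leaves_list_pos[of cs'] by simp
  with Node cs show ?case using leaves_pos[of c] by simp
qed simp

lemma ideg_graft_right: "ptree_wf s \<Longrightarrow> ideg (graft_right s t) = ideg s + ideg t"
proof (induction s)
  case (Node cs)
  then obtain xs c where "cs = xs @ [c]" "ptree_wf c" by (blast elim: ptree_wf_Node_snoc)
  with Node show ?case by (simp add: graft_right_l_snoc)
qed simp

lemma split_first_leaf: "ptree_wf t \<Longrightarrow> lp 0 t = Leaf \<and> rp 0 t = t"
proof (induction t)
  case (Node cs)
  then obtain c cs' where cs: "cs = c # cs'" "cs' \<noteq> []" "ptree_wf c"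
    by (blast elim: ptree_wf_Node_Cons)
  with Node show ?case using leaves_pos[of c] by (simp add: lp_Node rp_Node contract_Cons)
qed simp

lemma split_last_leaf: "ptree_wf s \<Longrightarrow> lp (leaves s - 1) s = s \<and> rp (leaves s - 1) s = Leaf"
proof (induction s)
  case (Node cs)
  then obtain xs c where cs: "cs = xs @ [c]" "xs \<noteq> []" "ptree_wf c"
    by (blast elim: ptree_wf_Node_snoc)
  then have "leaves_list xs \<le> leaves (Node cs) - 1"
    "leaves (Node cs) - 1 < leaves_list xs + leaves c"
    using leaves_pos[of c] by simp_all
  then show ?case using Node.IH[of c] cs lpl_rpl_at_split[of xs _ c "[]"]
    by (simp add: lp_Node rp_Node contract_append_Cons)
qed simp

lemma split_graft_right:
  "ptree_wf s \<Longrightarrow> ptree_wf t \<Longrightarrow>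
   lp (leaves s - 1) (graft_right s t) = s \<and> rp (leaves s - 1) (graft_right s t) = t"
proof (induction s)
  case Leaf
  then show ?case using split_first_leaf by simp
next
  case (Node cs)
  then obtain xs c where cs: "cs = xs @ [c]" "xs \<noteq> []" "ptree_wf c"
    by (blast elim: ptree_wf_Node_snoc)
  have "leaves (graft_right c t) = leaves c + leaves t - 1"
    using leaves_graft_right cs(3) leaves_pos Node.prems(2) by blast
  then have "leaves_list xs \<le> leaves (Node cs) - 1"
    "leaves (Node cs) - 1 < leaves_list xs + leaves (graft_right c t)"
    using cs leaves_pos[of c] leaves_pos[OF Node.prems(2)] by simp_all
  then show ?case using Node.IH[of c] Node.prems cs lpl_rpl_at_split[of xs _ "graft_right c t" "[]"]
    by (simp add: lp_Node rp_Node contract_append_Cons graft_right_l_snoc)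
qed

lemma split_graft_left:
  "ptree_wf s \<Longrightarrow> ptree_wf t \<Longrightarrow>
   lp (leaves s - 1) (graft_left s t) = s \<and> rp (leaves s - 1) (graft_left s t) = t"
proof (induction t)
  case Leaf
  then show ?case using split_last_leaf by simp
next
  case (Node cs)
  then obtain c cs' where cs: "cs = c # cs'" "cs' \<noteq> []" "ptree_wf c"
    by (blast elim: ptree_wf_Node_Cons)
  have "leaves s - 1 < leaves (graft_left s c)"
    using leaves_graft_left[OF cs(3)] leaves_pos[of s] leaves_pos[of c] Node.prems(1) cs(3) by simp
  then show ?case using Node.IH[of c] Node.prems cs by (simp add: lp_Node rp_Node contract_Cons)
qed

lemma pt_le_graft_right_Node:
  "ptree_wf s \<Longrightarrow> ys \<noteq> [] \<Longrightarrow>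
   pt_le (graft_right s (Node (u # ys))) (Node (graft_right s u # ys))"
proof (induction s)
  case Leaf
  then show ?case by (simp add: pt_le_refl)
next
  case (Node cs)
  then obtain xs c where cs: "cs = xs @ [c]" "xs \<noteq> []" "ptree_wf c"
    by (blast elim: ptree_wf_Node_snoc)
  have "pt_le (Node (xs @ [graft_right c (Node (u # ys))]))
      (Node (xs @ [Node (graft_right c u # ys)]))"
    using Node.IH[of c] cs Node.prems(2) pt_le_Node_cong by simp
  moreover have "lrot (Node (xs @ [Node (graft_right c u # ys)]))
      (Node (Node (xs @ [graft_right c u]) # ys))"
    using lrot.rot_root[OF cs(2), of "graft_right c u # ys"] Node.prems(2) by (cases ys) auto
  ultimately show ?case using cs by (auto simp: graft_right_l_snoc intro: pt_le_trans pt_le_if_lrot)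
qed

lemma pt_le_graft_left_Node:
  "xs \<noteq> [] \<Longrightarrow> ptree_wf t \<Longrightarrow>
   pt_le (Node (xs @ [graft_left u t])) (graft_left (Node (xs @ [u])) t)"
proof (induction t)
  case Leaf
  then show ?case by (simp add: pt_le_refl)
next
  case (Node cs)
  then obtain c cs' where cs: "cs = c # cs'" "cs' \<noteq> []" "ptree_wf c"
    by (blast elim: ptree_wf_Node_Cons)
  have "lrot (Node (xs @ [Node (graft_left u c # cs')]))
      (Node (Node (xs @ [graft_left u c]) # cs'))"
    using lrot.rot_root[OF Node.prems(1), of "graft_left u c # cs'"] cs by (cases cs') auto
  moreover have "pt_le (Node (Node (xs @ [graft_left u c]) # cs'))
      (Node (graft_left (Node (xs @ [u])) c # cs'))"
    using Node.IH[of c] cs Node.prems(1) pt_le_Node_cong[of _ _ "[]"] by simp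
  ultimately show ?case using cs by (auto intro: pt_le_trans pt_le_if_lrot)
qed

subsection \<open>Allowable splittings\<close>

lemma ideg_le_split: "ptree_wf r \<Longrightarrow> i < leaves r \<Longrightarrow> ideg r \<le> ideg (lp i r) + ideg (rp i r)"
proof (induction r arbitrary: i)
  case (Node cs)
  then obtain xs c ys where split: "cs = xs @ c # ys" "leaves_list xs \<le> i"
      "i < leaves_list xs + leaves c"
    by (auto elim: leaves_list_split)
  then have "ideg c \<le> ideg (lp (i - leaves_list xs) c) + ideg (rp (i - leaves_list xs) c)"
    using Node by auto
  moreover have "xs \<noteq> [] \<or> ys \<noteq> []" using Node.prems split by auto
  ultimately show ?case using lpl_rpl_at_split[OF split(2,3), of ys] split
    by (auto simp: lp_Node rp_Node ideg_contract_snoc ideg_contract_Cons)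
qed simp

text \<open>Allowability forces the path to leave every node through its first or its last
  child: otherwise both parts would keep a copy of the node.\<close>

lemma allowable_NodeE:
  assumes wf: "ptree_wf (Node cs)" and "i < leaves (Node cs)" and al: "allowable i (Node cs)"
  obtains (first) c ys where "cs = c # ys" "ys \<noteq> []" "ptree_wf c" "i < leaves c" "allowable i c"
      "lp i (Node cs) = lp i c" "rp i (Node cs) = Node (rp i c # ys)"
    | (last) xs c j where "cs = xs @ [c]" "xs \<noteq> []" "ptree_wf c" "j < leaves c" "allowable j c"
      "lp i (Node cs) = Node (xs @ [lp j c])" "rp i (Node cs) = rp j c"
proof -
  obtain xs c ys where split: "cs = xs @ c # ys" "leaves_list xs \<le> i"
      "i < leaves_list xs + leaves c"
    using \<open>i < leaves (Node cs)\<close> by (auto elim: leaves_list_split)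
  define j where "j = i - leaves_list xs"
  have c: "ptree_wf c" "j < leaves c" using wf split by (auto simp: j_def)
  have parts: "lp i (Node cs) = contract (xs @ [lp j c])" "rp i (Node cs) = contract (rp j c # ys)"
    using lpl_rpl_at_split[OF split(2,3), of ys] split by (simp_all add: lp_Node rp_Node j_def)
  have "ideg c \<le> ideg (lp j c) + ideg (rp j c)" using c by (rule ideg_le_split)
  moreover have "length xs + length ys \<ge> 1" using wf split by auto
  moreover have "ideg (contract (xs @ [lp j c])) + ideg (contract (rp j c # ys))
      = 1 + sum_list (map ideg xs) + ideg c + sum_list (map ideg ys)"
    using al parts split by (simp add: allowable_def)
  ultimately have "allowable j c" "xs = [] \<and> ys \<noteq> [] \<or> xs \<noteq> [] \<and> ys = []"
    by (auto simp: allowable_def ideg_contract_snoc ideg_contract_Cons split: if_splits)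
  then show thesis
    using first[of c ys] last[of xs c j] c parts split
    by (auto simp: j_def contract_Cons contract_append_Cons)
qed

lemma graft_right_split_pt_le:
  "ptree_wf r \<Longrightarrow> i < leaves r \<Longrightarrow> allowable i r \<Longrightarrow> pt_le (graft_right (lp i r) (rp i r)) r"
proof (induction r arbitrary: i)
  case Leaf
  then show ?case by (simp add: pt_le_refl)
next
  case (Node cs)
  from Node.prems show ?case
  proof (cases rule: allowable_NodeE)
    case (first c ys)
    then have IH: "pt_le (graft_right (lp i c) (rp i c)) c" using Node.IH by simp
    have "pt_le (graft_right (lp i c) (Node (rp i c # ys)))
        (Node (graft_right (lp i c) (rp i c) # ys))"
      using ptree_wf_lp(1)[OF first(3)] by (rule pt_le_graft_right_Node[OF _ first(2)])
    also have "pt_le \<dots> (Node (c # ys))" using pt_le_Node_cong[OF IH, of "[]"] by simp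
    finally show ?thesis using first by simp
  next
    case (last xs c j)
    then have IH: "pt_le (graft_right (lp j c) (rp j c)) c" using Node.IH by simp
    then show ?thesis using pt_le_Node_cong[OF IH, of xs "[]"] last
      by (simp add: graft_right_l_snoc)
  qed
qed

lemma pt_le_graft_left_split:
  "ptree_wf r \<Longrightarrow> i < leaves r \<Longrightarrow> allowable i r \<Longrightarrow> pt_le r (graft_left (lp i r) (rp i r))"
proof (induction r arbitrary: i)
  case Leaf
  then show ?case by (simp add: pt_le_refl)
next
  case (Node cs)
  from Node.prems show ?case
  proof (cases rule: allowable_NodeE)
    case (first c ys)
    then have IH: "pt_le c (graft_left (lp i c) (rp i c))" using Node.IH by simp
    then show ?thesis using pt_le_Node_cong[OF IH, of "[]" ys] first by simp
  next
    case (last xs c j)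
    then have IH: "pt_le c (graft_left (lp j c) (rp j c))" using Node.IH by simp
    have "pt_le (Node (xs @ [c])) (Node (xs @ [graft_left (lp j c) (rp j c)]))"
      using pt_le_Node_cong[OF IH, of xs "[]"] by simp
    also have "pt_le \<dots> (graft_left (Node (xs @ [lp j c])) (rp j c))"
      using ptree_wf_rp(1)[OF last(3,4)] by (rule pt_le_graft_left_Node[OF last(2)])
    finally show ?thesis using last by simp
  qed
qed

definition splits_into :: "ptree \<Rightarrow> ptree \<Rightarrow> ptree \<Rightarrow> bool" where
  "splits_into r s t \<longleftrightarrow> leaves s - 1 \<le> deg r \<and> allowable (leaves s - 1) r
    \<and> lp (leaves s - 1) r = s \<and> rp (leaves s - 1) r = t"

lemma splits_into_if_between_grafts:
  assumes "ptree_wf s" "ptree_wf t"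
    and lower: "pt_le (graft_right s t) r" and upper: "pt_le r (graft_left s t)"
  shows "splits_into r s t"
proof -
  let ?i = "leaves s - 1"
  have "leaves r = leaves s + leaves t - 1"
    using leaves_pt_le[OF lower] leaves_graft_right assms(1,2) leaves_pos by simp
  then have "?i \<le> deg r" using leaves_pos[OF assms(2)] by (simp add: deg_def)
  moreover have "lp ?i r = s"
    using pt_le_lp[OF lower, of ?i] pt_le_lp[OF upper, of ?i]
      split_graft_right split_graft_left assms
    by (auto intro: pt_le_antisym)
  moreover have "rp ?i r = t"
    using pt_le_rp[OF lower, of ?i] pt_le_rp[OF upper, of ?i]
      split_graft_right split_graft_left assms
    by (auto intro: pt_le_antisym)
  moreover have "ideg r = ideg s + ideg t"
    using ideg_pt_le[OF lower] ideg_graft_right assms(1) by simp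
  ultimately show ?thesis by (simp add: splits_into_def allowable_def)
qed

lemma splits_into_iff_between_grafts:
  assumes "ptree_wf s" "ptree_wf t" "ptree_wf r"
  shows "splits_into r s t \<longleftrightarrow> pt_le (graft_right s t) r \<and> pt_le r (graft_left s t)"
proof
  assume split: "splits_into r s t"
  then have "leaves s - 1 < leaves r"
    using leaves_pos[OF assms(3)] unfolding splits_into_def deg_def by linarith
  then show "pt_le (graft_right s t) r \<and> pt_le r (graft_left s t)"
    using graft_right_split_pt_le pt_le_graft_left_split assms(3) split
    unfolding splits_into_def by metis
qed (use splits_into_if_between_grafts assms in blast)

lemma dual_prod_dualb:
  "dual_prod (dualb s) (dualb t) r = (if ptree_wf r \<and> splits_into r s t then 1 else 0)"
proof (cases "ptree_wf r")
  case True
  let ?i = "leaves s - 1"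
  let ?term = "\<lambda>i. if allowable i r then dualb s (lp i r) * dualb t (rp i r) else 0"
  have other: "?term i = 0" if "i \<in> {0..deg r}" "i \<noteq> ?i" for i
  proof -
    have "i < leaves r" using that leaves_pos[OF True] by (simp add: deg_def)
    then have "lp i r \<noteq> s" using leaves_lp(1)[of i r] that(2) by auto
    then show ?thesis by (simp add: dualb_def)
  qed
  have "(\<Sum>i\<in>{0..deg r}. ?term i) = (\<Sum>i\<in>{0..deg r}. if i = ?i then ?term ?i else 0)"
    using other by (intro sum.cong) auto
  also have "\<dots> = (if ?i \<le> deg r then ?term ?i else 0)"
    by (subst sum.delta) auto
  finally have "dual_prod (dualb s) (dualb t) r = (if ?i \<le> deg r then ?term ?i else 0)"
    using True by (simp add: dual_prod_def)
  then show ?thesis using True by (simp add: dualb_def splits_into_def)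
qed (simp add: dual_prod_def)

theorem mainTheorem3:
  assumes "ptree_wf s" and "ptree_wf t"
  shows "dual_prod (dualb s) (dualb t) =
    (\<lambda>r. if ptree_wf r \<and> pt_le (tree_under s t) r \<and> pt_le r (tree_over s t) then 1 else 0)"
proof
  fix r
  show "dual_prod (dualb s) (dualb t) r =
    (if ptree_wf r \<and> pt_le (tree_under s t) r \<and> pt_le r (tree_over s t) then 1 else 0)"
    using splits_into_iff_between_grafts[OF assms, of r]
    by (cases "ptree_wf r") (simp_all add: dual_prod_dualb tree_under_def tree_over_def)
qed

end
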